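(* Let $-1$ denote the automorphism of $\mathcal A_\theta^{alg}$ with $U_1\mapsto U_1^{-1}$, $U_2\mapsto U_2^{-1}$, and let $H^0(\mathcal A_\theta^{alg},{}_{-1}\mathcal A_\theta^{alg\ast})$ be the space of formal series $\varphi=\sum\varphi_{n,m}U_1^nU_2^m$ with $((-1)\cdot a)\varphi=\varphi a$ for all $a\in\mathcal A_\theta^{alg}$. Let $\mathbb Z_6$ be generated by the automorphism $-\omega$ with $U_1\mapsto U_2$, $U_2\mapsto\lambda^{-1/2}U_1^{-1}U_2$, acting termwise on this space. Then $H^0(\mathcal A_\theta^{alg},{}_{-1}\mathcal A_\theta^{alg\ast})^{\mathbb Z_6}\cong\mathbb C^2$.
   Context: Let $\theta\in\mathbb R\setminus\mathbb Q$, $\lambda=e^{2\pi i\theta}$, $\lambda^s:=e^{2\pi i\theta s}$. $\mathcal A_\theta^{alg}$ is the complex algebra of finite sums $\sum a_{n,m}U_1^nU_2^m$ with $U_1,U_2$ invertible and $U_2U_1=\lambda U_1U_2$; formal series $\sum_{(n,m)\in\mathbb Z^2}\varphi_{n,m}U_1^nU_2^m$ with arbitrary coefficients form an $\mathcal A_\theta^{alg}$-bimodule via multiplication. Termwise action of an automorphism $h$: $h\cdot\sum\varphi_{n,m}U_1^nU_2^m=\sum\varphi_{n,m}\,h\cdot(U_1^nU_2^m)$. *)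

theory Defs
  imports Complex_Main
begin

(* Coefficient functions indexed by (n,m) \<in> \<int>\<^sup>2 represent sum phi(n,m) U1^n U2^m.
   Elements of A_theta^alg: finitely supported ones; formal series: arbitrary ones. *)
type_synonym coeffs = "int \<times> int \<Rightarrow> complex"

definition lam :: "real \<Rightarrow> real \<Rightarrow> complex" where
  "lam \<theta> s = exp (complex_of_real (2 * pi * \<theta> * s) * \<i>)"

definition supp :: "coeffs \<Rightarrow> (int \<times> int) set" where
  "supp a = {k. a k \<noteq> 0}"

definition isalg :: "coeffs \<Rightarrow> bool" where
  "isalg a \<longleftrightarrow> finite (supp a)"

definition psub :: "int \<times> int \<Rightarrow> int \<times> int \<Rightarrow> int \<times> int" where
  "psub k p = (fst k - fst p, snd k - snd p)"

(* (U1^n U2^m)(U1^p U2^q) = lam^(m p) U1^(n+p) U2^(m+q), from U2 U1 = lam U1 U2 *)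
definition lmul :: "real \<Rightarrow> coeffs \<Rightarrow> coeffs \<Rightarrow> coeffs" where
  "lmul \<theta> a \<phi> k = (\<Sum>p\<in>supp a. a p * \<phi> (psub k p) * lam \<theta> (of_int (snd p * fst (psub k p))))"

definition rmul :: "real \<Rightarrow> coeffs \<Rightarrow> coeffs \<Rightarrow> coeffs" where
  "rmul \<theta> \<phi> a k = (\<Sum>q\<in>supp a. \<phi> (psub k q) * a q * lam \<theta> (of_int (snd (psub k q) * fst q)))"

definition mono :: "int \<times> int \<Rightarrow> coeffs" where
  "mono p = (\<lambda>k. if k = p then 1 else 0)"

definition aone :: coeffs where "aone = mono (0, 0)"

definition aneg :: "coeffs \<Rightarrow> coeffs" where
  "aneg a k = a (- fst k, - snd k)"

fun npow :: "real \<Rightarrow> coeffs \<Rightarrow> nat \<Rightarrow> coeffs" where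
  "npow \<theta> x 0 = aone"
| "npow \<theta> x (Suc n) = lmul \<theta> (npow \<theta> x n) x"

definition ainv :: "real \<Rightarrow> coeffs \<Rightarrow> coeffs" where
  "ainv \<theta> x = (THE y. isalg y \<and> lmul \<theta> x y = aone \<and> lmul \<theta> y x = aone)"

definition zpow :: "real \<Rightarrow> coeffs \<Rightarrow> int \<Rightarrow> coeffs" where
  "zpow \<theta> x k = (if 0 \<le> k then npow \<theta> x (nat k) else npow \<theta> (ainv \<theta> x) (nat (- k)))"

definition momega_U1 :: coeffs where "momega_U1 = mono (0, 1)"

definition momega_U2 :: "real \<Rightarrow> coeffs" where
  "momega_U2 \<theta> = (\<lambda>k. lam \<theta> (- 1 / 2) * lmul \<theta> (mono (-1, 0)) (mono (0, 1)) k)"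

definition momega_mono :: "real \<Rightarrow> int \<times> int \<Rightarrow> coeffs" where
  "momega_mono \<theta> p = lmul \<theta> (zpow \<theta> momega_U1 (fst p)) (zpow \<theta> (momega_U2 \<theta>) (snd p))"

(* termwise action of an automorphism h (given on monomials) on a formal series;
   each coefficient only receives contributions from finitely many monomials *)
definition termwise :: "(int \<times> int \<Rightarrow> coeffs) \<Rightarrow> coeffs \<Rightarrow> coeffs" where
  "termwise h \<phi> k = (\<Sum>p\<in>{p. h p k \<noteq> 0}. \<phi> p * h p k)"

definition H0neg :: "real \<Rightarrow> coeffs set" where
  "H0neg \<theta> = {\<phi>. \<forall>a. isalg a \<longrightarrow> lmul \<theta> (aneg a) \<phi> = rmul \<theta> \<phi> a}"

end

(* Write the coefficients of a formal series in Weyl-ordered form, phi k = lam (k1 k2 / 2) * chi k.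
   Tested on the monomials U1^q1 U2^q2, the condition ((-1) a) phi = phi a becomes
   chi (k + q) = chi (k - q): chi is invariant under every point reflection of Z^2, so it only
   depends on k mod 2.  The automorphism -omega sends U1^n U2^m to a nonzero multiple of
   U1^-m U2^(n+m), and in Weyl-ordered coordinates it simply permutes Z^2 along
   (n, m) |-> (-m, n + m); modulo 2 this fixes the even class and permutes the other three
   cyclically.  The invariants are therefore determined by two values, one on the even sublattice
   and one on its complement. *)

theory Submission
  imports Defs
begin

lemma lam_add: "lam t (a + b) = lam t a * lam t b"
  unfolding lam_def by (simp add: distrib_left distrib_right exp_add[symmetric])

lemma lam_nonzero [simp]: "lam t a \<noteq> 0"
  unfolding lam_def by simp

lemma lam_zero [simp]: "lam t 0 = 1"
  unfolding lam_def by simp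

lemma lam_power_int: "lam t a powi k = lam t (of_int k * a)"
  unfolding lam_def exp_power_int by (simp add: algebra_simps)

lemma lam_power: "lam t a ^ n = lam t (of_nat n * a)"
  using lam_power_int[of t a "int n"] by simp

lemma lam_minus: "lam t (- a) = inverse (lam t a)"
  by (metis lam_add lam_zero add.right_inverse inverse_unique)

definition cmono :: "complex \<Rightarrow> int \<times> int \<Rightarrow> coeffs" where
  "cmono c p = (\<lambda>k. if k = p then c else 0)"

lemma mono_eq_cmono: "mono p = cmono 1 p"
  unfolding mono_def cmono_def ..

lemma aone_eq_cmono: "aone = cmono 1 (0, 0)"
  unfolding aone_def mono_eq_cmono ..

lemma supp_cmono: "supp (cmono c p) = (if c = 0 then {} else {p})"
  unfolding supp_def cmono_def by auto

lemma isalg_cmono: "isalg (cmono c p)"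
  unfolding isalg_def supp_cmono by simp

lemma aneg_cmono: "aneg (cmono c (a, b)) = cmono c (- a, - b)"
  unfolding aneg_def cmono_def by (auto simp: fun_eq_iff)

lemma lmul_cmono:
  "lmul t (cmono c (a, b)) \<phi> (k1, k2) = c * \<phi> (k1 - a, k2 - b) * lam t (of_int (b * (k1 - a)))"
  unfolding lmul_def supp_cmono by (simp add: cmono_def psub_def)

lemma rmul_cmono:
  "rmul t \<phi> (cmono c (a, b)) (k1, k2) = \<phi> (k1 - a, k2 - b) * c * lam t (of_int ((k2 - b) * a))"
  unfolding rmul_def supp_cmono by (simp add: cmono_def psub_def)

lemma lmul_cmono_cmono:
  "lmul t (cmono c (a, b)) (cmono d (a', b')) = cmono (c * d * lam t (of_int (b * a'))) (a + a', b + b')"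
proof
  fix k :: "int \<times> int"
  show "lmul t (cmono c (a, b)) (cmono d (a', b')) k = cmono (c * d * lam t (of_int (b * a'))) (a + a', b + b') k"
    by (cases k) (simp add: lmul_cmono, auto simp: cmono_def)
qed

lemma npow_cmono:
  "npow t (cmono c (a, b)) n =
     cmono (c ^ n * lam t (of_int (a * b) * (of_nat n * (of_nat n - 1) / 2))) (a * int n, b * int n)"
proof (induction n)
  case 0
  show ?case by (simp add: aone_eq_cmono)
next
  case (Suc n)
  have "lam t (of_int (a * b) * (of_nat n * (of_nat n - 1) / 2)) * lam t (of_int (b * (a * int n)))
      = lam t (of_int (a * b) * (of_nat (Suc n) * (of_nat (Suc n) - 1) / 2))"
    unfolding lam_add[symmetric] by (rule arg_cong[where f = "lam t"]) (simp add: field_simps)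
  then show ?case
    using Suc by (simp add: lmul_cmono_cmono algebra_simps)
qed

lemma ainv_cmono:
  assumes "c \<noteq> 0"
  shows "ainv t (cmono c (a, b)) = cmono (inverse c * lam t (of_int (a * b))) (- a, - b)"
  unfolding ainv_def
proof (rule the_equality)
  let ?e = "inverse c * lam t (of_int (a * b))"
  have "c * ?e * lam t (of_int (b * - a)) = 1" "?e * c * lam t (of_int (- b * a)) = 1"
    using assms by (simp_all add: lam_minus mult.commute field_simps)
  then show "isalg (cmono ?e (- a, - b)) \<and> lmul t (cmono c (a, b)) (cmono ?e (- a, - b)) = aone
      \<and> lmul t (cmono ?e (- a, - b)) (cmono c (a, b)) = aone"
    by (simp add: isalg_cmono lmul_cmono_cmono aone_eq_cmono)
  fix y
  assume "isalg y \<and> lmul t (cmono c (a, b)) y = aone \<and> lmul t y (cmono c (a, b)) = aone"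
  then have right_inverse: "lmul t (cmono c (a, b)) y = aone" by simp
  show "y = cmono ?e (- a, - b)"
  proof
    fix k :: "int \<times> int"
    obtain k1 k2 where k: "k = (k1, k2)" by (cases k)
    have "c * y k * lam t (of_int (b * k1)) = (if k = (- a, - b) then 1 else 0)"
      using fun_cong[OF right_inverse, of "(k1 + a, k2 + b)"]
      by (simp only: lmul_cmono aone_eq_cmono) (auto simp: k cmono_def)
    then show "y k = cmono ?e (- a, - b) k"
      using assms by (auto simp: k cmono_def lam_minus field_simps)
  qed
qed

lemma zpow_cmono:
  assumes "c \<noteq> 0"
  shows "zpow t (cmono c (a, b)) k =
           cmono (c powi k * lam t (of_int (a * b) * (of_int k * (of_int k - 1) / 2))) (a * k, b * k)"
proof (cases "0 \<le> k")
  case True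
  then show ?thesis
    by (simp add: zpow_def npow_cmono power_int_nonneg_exp)
next
  case False
  define m where "m = nat (- k)"
  have k: "k = - int m" using False by (simp add: m_def)
  have "lam t (of_int (a * b)) ^ m * lam t (of_int (a * b) * (of_nat m * (of_nat m - 1) / 2))
      = lam t (of_int (a * b) * (- of_nat m * (- of_nat m - 1) / 2))"
    unfolding lam_power lam_add[symmetric] by (rule arg_cong[where f = "lam t"]) (simp add: field_simps)
  with assms show ?thesis
    by (simp add: zpow_def ainv_cmono npow_cmono power_mult_distrib power_int_minus k mult.assoc aone_eq_cmono
        flip: power_inverse)
qed

definition rot6 :: "int \<times> int \<Rightarrow> int \<times> int" where
  "rot6 p = (- snd p, fst p + snd p)"

definition rot6_inv :: "int \<times> int \<Rightarrow> int \<times> int" where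
  "rot6_inv k = (fst k + snd k, - fst k)"

lemma rot6_inv_rot6 [simp]: "rot6_inv (rot6 p) = p"
  and rot6_rot6_inv [simp]: "rot6 (rot6_inv k) = k"
  by (simp_all add: rot6_def rot6_inv_def)

definition momega_coeff :: "real \<Rightarrow> int \<times> int \<Rightarrow> complex" where
  "momega_coeff t p = lam t (- (of_int (snd p))\<^sup>2 / 2 - of_int (fst p * snd p))"

lemma momega_U1_eq: "momega_U1 = cmono 1 (0, 1)"
  unfolding momega_U1_def mono_eq_cmono ..

lemma momega_U2_eq: "momega_U2 t = cmono (lam t (- 1 / 2)) (- 1, 1)"
  unfolding momega_U2_def mono_eq_cmono lmul_cmono_cmono by (auto simp: cmono_def)

lemma momega_mono_eq: "momega_mono t p = cmono (momega_coeff t p) (rot6 p)"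
proof -
  obtain p1 p2 where p: "p = (p1, p2)" by (cases p)
  have "lam t (- 1 / 2) powi p2 * lam t (- (of_int p2 * (of_int p2 - 1) / 2)) * lam t (of_int (p1 * - p2))
      = momega_coeff t p"
    unfolding momega_coeff_def lam_power_int lam_add[symmetric] p
    by (rule arg_cong[where f = "lam t"]) (simp add: field_simps power2_eq_square)
  then show ?thesis
    by (simp add: momega_mono_def momega_U1_eq momega_U2_eq zpow_cmono lmul_cmono_cmono rot6_def p)
qed

lemma termwise_cmono:
  assumes "\<And>p. g p \<noteq> 0" and "\<And>p. S (T p) = p" and "\<And>k. T (S k) = k"
  shows "termwise (\<lambda>p. cmono (g p) (T p)) \<phi> k = \<phi> (S k) * g (S k)"
proof -
  have "k = T p \<longleftrightarrow> p = S k" for p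
    using assms(2,3) by metis
  then have "{p. cmono (g p) (T p) k \<noteq> 0} = {S k}"
    using assms(1) by (simp add: cmono_def)
  then show ?thesis
    by (simp add: termwise_def cmono_def assms(3))
qed

lemma termwise_cmono_fixed_iff:
  assumes "\<And>p. g p \<noteq> 0" and "\<And>p. S (T p) = p" and "\<And>k. T (S k) = k"
  shows "termwise (\<lambda>p. cmono (g p) (T p)) \<phi> = \<phi> \<longleftrightarrow> (\<forall>p. \<phi> p * g p = \<phi> (T p))"
  unfolding fun_eq_iff termwise_cmono[OF assms] by (metis assms(2,3))

lemma mem_H0neg_iff:
  "\<phi> \<in> H0neg t \<longleftrightarrow> (\<forall>k1 k2 q1 q2.
     \<phi> (k1 + q1, k2 + q2) * lam t (of_int (- q2 * (k1 + q1))) =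
     \<phi> (k1 - q1, k2 - q2) * lam t (of_int ((k2 - q2) * q1)))"
  (is "_ \<longleftrightarrow> (\<forall>k1 k2 q1 q2. ?rel k1 k2 q1 q2)")
proof
  assume H0: "\<phi> \<in> H0neg t"
  show "\<forall>k1 k2 q1 q2. ?rel k1 k2 q1 q2"
  proof (intro allI)
    fix k1 k2 q1 q2
    have "lmul t (aneg (cmono 1 (q1, q2))) \<phi> (k1, k2) = rmul t \<phi> (cmono 1 (q1, q2)) (k1, k2)"
      using H0 isalg_cmono unfolding H0neg_def by simp
    then show "?rel k1 k2 q1 q2"
      by (simp add: aneg_cmono lmul_cmono rmul_cmono)
  qed
next
  assume rel: "\<forall>k1 k2 q1 q2. ?rel k1 k2 q1 q2"
  show "\<phi> \<in> H0neg t"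
    unfolding H0neg_def
  proof (intro CollectI allI impI ext)
    fix a :: coeffs and k :: "int \<times> int"
    let ?neg = "\<lambda>q :: int \<times> int. (- fst q, - snd q)"
    have supp_aneg: "supp (aneg a) = ?neg ` supp a"
      unfolding supp_def aneg_def by (force simp: image_iff)
    have "inj_on ?neg (supp a)"
      by (auto simp: inj_on_def)
    then have "lmul t (aneg a) \<phi> k =
        (\<Sum>q\<in>supp a. a q * \<phi> (psub k (?neg q)) * lam t (of_int (snd (?neg q) * fst (psub k (?neg q)))))"
      unfolding lmul_def supp_aneg by (simp add: sum.reindex aneg_def)
    also have "\<dots> = (\<Sum>q\<in>supp a. \<phi> (psub k q) * a q * lam t (of_int (snd (psub k q) * fst q)))"
    proof (rule sum.cong[OF refl])
      fix q :: "int \<times> int"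
      have "?rel (fst k) (snd k) (fst q) (snd q)"
        using rel by blast
      then show "a q * \<phi> (psub k (?neg q)) * lam t (of_int (snd (?neg q) * fst (psub k (?neg q)))) =
          \<phi> (psub k q) * a q * lam t (of_int (snd (psub k q) * fst q))"
        by (simp add: psub_def algebra_simps)
    qed
    also have "\<dots> = rmul t \<phi> a k"
      unfolding rmul_def ..
    finally show "lmul t (aneg a) \<phi> k = rmul t \<phi> a k" .
  qed
qed

definition twist :: "real \<Rightarrow> int \<times> int \<Rightarrow> complex" where
  "twist t k = lam t (of_int (fst k * snd k) / 2)"

lemma twist_nonzero [simp]: "twist t k \<noteq> 0"
  unfolding twist_def by simp

lemma H0neg_twist_iff:
  "(\<lambda>k. twist t k * \<chi> k) \<in> H0neg t \<longleftrightarrow>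
     (\<forall>k1 k2 q1 q2. \<chi> (k1 + q1, k2 + q2) = \<chi> (k1 - q1, k2 - q2))"
proof -
  have "twist t (k1 + q1, k2 + q2) * lam t (of_int (- q2 * (k1 + q1))) =
        twist t (k1 - q1, k2 - q2) * lam t (of_int ((k2 - q2) * q1))" for k1 k2 q1 q2
    unfolding twist_def lam_add[symmetric]
    by (rule arg_cong[where f = "lam t"]) (simp add: field_simps)
  moreover have "twist t (k1 + q1, k2 + q2) * lam t (of_int (- q2 * (k1 + q1))) \<noteq> 0" for k1 k2 q1 q2
    by simp
  ultimately show ?thesis
    unfolding mem_H0neg_iff by (simp add: mult.commute mult.left_commute)
qed

lemma twist_mult_momega_coeff: "twist t p * momega_coeff t p = twist t (rot6 p)"
  unfolding twist_def momega_coeff_def rot6_def lam_add[symmetric]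
  by (rule arg_cong[where f = "lam t"]) (simp add: field_simps power2_eq_square)

lemma momega_fixed_twist_iff:
  "termwise (momega_mono t) (\<lambda>k. twist t k * \<chi> k) = (\<lambda>k. twist t k * \<chi> k) \<longleftrightarrow>
     (\<forall>p. \<chi> p = \<chi> (rot6 p))"
proof -
  have momega: "momega_mono t = (\<lambda>p. cmono (momega_coeff t p) (rot6 p))"
    using momega_mono_eq by blast
  have coeff: "momega_coeff t p \<noteq> 0" for p
    unfolding momega_coeff_def by simp
  have "twist t p * \<chi> p * momega_coeff t p = twist t (rot6 p) * \<chi> (rot6 p) \<longleftrightarrow>
      \<chi> p = \<chi> (rot6 p)" for p
    using twist_nonzero[of t "rot6 p"]
    by (simp add: twist_mult_momega_coeff[symmetric] mult.commute mult.left_commute)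
  then show ?thesis
    unfolding momega termwise_cmono_fixed_iff[OF coeff rot6_inv_rot6 rot6_rot6_inv] by simp
qed

lemma point_reflection_invariant_iff_mod_2:
  fixes \<chi> :: "int \<times> int \<Rightarrow> 'a"
  shows "(\<forall>k1 k2 q1 q2. \<chi> (k1 + q1, k2 + q2) = \<chi> (k1 - q1, k2 - q2)) \<longleftrightarrow>
     (\<forall>k1 k2. \<chi> (k1, k2) = \<chi> (k1 mod 2, k2 mod 2))"
proof
  assume refl: "\<forall>k1 k2 q1 q2. \<chi> (k1 + q1, k2 + q2) = \<chi> (k1 - q1, k2 - q2)"
  show "\<forall>k1 k2. \<chi> (k1, k2) = \<chi> (k1 mod 2, k2 mod 2)"
  proof (intro allI)
    fix k1 k2 :: int
    have "\<chi> ((k1 - k1 div 2) + k1 div 2, (k2 - k2 div 2) + k2 div 2) =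
          \<chi> ((k1 - k1 div 2) - k1 div 2, (k2 - k2 div 2) - k2 div 2)"
      using refl by blast
    moreover have "(k1 - k1 div 2) - k1 div 2 = k1 mod 2" "(k2 - k2 div 2) - k2 div 2 = k2 mod 2"
      by (simp_all add: minus_div_mult_eq_mod[symmetric])
    ultimately show "\<chi> (k1, k2) = \<chi> (k1 mod 2, k2 mod 2)"
      by simp
  qed
next
  assume mod_2: "\<forall>k1 k2. \<chi> (k1, k2) = \<chi> (k1 mod 2, k2 mod 2)"
  have same_parity: "(a + b) mod 2 = (a - b) mod 2" for a b :: int
    by presburger
  show "\<forall>k1 k2 q1 q2. \<chi> (k1 + q1, k2 + q2) = \<chi> (k1 - q1, k2 - q2)"
  proof (intro allI)
    fix k1 k2 q1 q2 :: int
    show "\<chi> (k1 + q1, k2 + q2) = \<chi> (k1 - q1, k2 - q2)"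
      using mod_2 same_parity by metis
  qed
qed

definition parity_fun :: "complex \<Rightarrow> complex \<Rightarrow> int \<times> int \<Rightarrow> complex" where
  "parity_fun x y k = (if even (fst k) \<and> even (snd k) then x else y)"

lemma mod_2_rot6_invariant_iff:
  "(\<forall>k1 k2. \<chi> (k1, k2) = \<chi> (k1 mod 2, k2 mod 2)) \<and> (\<forall>p. \<chi> p = \<chi> (rot6 p)) \<longleftrightarrow>
     (\<exists>x y. \<chi> = parity_fun x y)"
proof
  assume "(\<forall>k1 k2. \<chi> (k1, k2) = \<chi> (k1 mod 2, k2 mod 2)) \<and> (\<forall>p. \<chi> p = \<chi> (rot6 p))"
  then have mod_2: "\<And>k1 k2. \<chi> (k1, k2) = \<chi> (k1 mod 2, k2 mod 2)"
    and rot: "\<And>p. \<chi> p = \<chi> (rot6 p)" by blast+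
  have "\<chi> (0, 1) = \<chi> (1, 0)"
    using rot[of "(1, 0)"] by (simp add: rot6_def)
  moreover have "\<chi> (1, 1) = \<chi> (0, 1)"
    using rot[of "(0, 1)"] mod_2[of "-1" 1] by (simp add: rot6_def)
  ultimately have "\<chi> k = parity_fun (\<chi> (0, 0)) (\<chi> (1, 0)) k" for k
    using mod_2[of "fst k" "snd k"]
    by (cases "even (fst k)"; cases "even (snd k)") (simp_all add: parity_fun_def mod2_eq_if)
  then have "\<chi> = parity_fun (\<chi> (0, 0)) (\<chi> (1, 0))"
    by (rule ext)
  then show "\<exists>x y. \<chi> = parity_fun x y" by blast
next
  assume "\<exists>x y. \<chi> = parity_fun x y"
  then show "(\<forall>k1 k2. \<chi> (k1, k2) = \<chi> (k1 mod 2, k2 mod 2)) \<and> (\<forall>p. \<chi> p = \<chi> (rot6 p))"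
    by (auto simp: parity_fun_def rot6_def split: prod.splits)
qed

lemma mem_momega_invariants_twist_iff:
  "(\<lambda>k. twist t k * \<chi> k) \<in> {\<phi> \<in> H0neg t. termwise (momega_mono t) \<phi> = \<phi>} \<longleftrightarrow>
     (\<exists>x y. \<chi> = parity_fun x y)"
  by (simp add: H0neg_twist_iff momega_fixed_twist_iff point_reflection_invariant_iff_mod_2
      flip: mod_2_rot6_invariant_iff)

lemma momega_invariants_eq:
  "{\<phi> \<in> H0neg t. termwise (momega_mono t) \<phi> = \<phi>} =
     range (\<lambda>(x, y) k. twist t k * parity_fun x y k)"
proof (intro set_eqI iffI)
  fix \<phi>
  have untwist: "\<phi> = (\<lambda>k. twist t k * (\<phi> k / twist t k))"
    by simp
  assume "\<phi> \<in> {\<phi> \<in> H0neg t. termwise (momega_mono t) \<phi> = \<phi>}"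
  then obtain x y where "(\<lambda>k. \<phi> k / twist t k) = parity_fun x y"
    by (subst (asm) untwist) (auto simp only: mem_momega_invariants_twist_iff)
  then have "\<phi> = (\<lambda>k. twist t k * parity_fun x y k)"
    by (simp add: fun_eq_iff field_simps)
  then show "\<phi> \<in> range (\<lambda>(x, y) k. twist t k * parity_fun x y k)"
    by auto
next
  fix \<phi>
  assume "\<phi> \<in> range (\<lambda>(x, y) k. twist t k * parity_fun x y k)"
  then show "\<phi> \<in> {\<phi> \<in> H0neg t. termwise (momega_mono t) \<phi> = \<phi>}"
    using mem_momega_invariants_twist_iff by auto
qed

theorem mainTheorem11:
  fixes \<theta> :: real
  assumes "\<theta> \<notin> \<rat>"
  shows "\<exists>\<psi>1 \<psi>2 :: coeffs.
           bij_betw (\<lambda>(x :: complex, y :: complex). (\<lambda>k. x * \<psi>1 k + y * \<psi>2 k))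
             UNIV {\<phi> \<in> H0neg \<theta>. termwise (momega_mono \<theta>) \<phi> = \<phi>}"
  \<comment> \<open>The computation is valid for every \<open>\<theta>\<close>.\<close>
proof (intro exI)
  let ?\<psi>1 = "\<lambda>k. twist \<theta> k * parity_fun 1 0 k"
  let ?\<psi>2 = "\<lambda>k. twist \<theta> k * parity_fun 0 1 k"
  let ?F = "\<lambda>(x :: complex, y :: complex). (\<lambda>k. x * ?\<psi>1 k + y * ?\<psi>2 k)"
  have F_eq: "?F = (\<lambda>(x, y) k. twist \<theta> k * parity_fun x y k)"
    by (auto simp: fun_eq_iff parity_fun_def)
  have "inj ?F"
  proof (rule injI)
    fix u v :: "complex \<times> complex"
    assume "?F u = ?F v"
    then have "?F u (0, 0) = ?F v (0, 0)" "?F u (1, 0) = ?F v (1, 0)"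
      by simp_all
    then show "u = v"
      by (cases u; cases v) (simp add: parity_fun_def twist_def)
  qed
  then show "bij_betw ?F UNIV {\<phi> \<in> H0neg \<theta>. termwise (momega_mono \<theta>) \<phi> = \<phi>}"
    unfolding momega_invariants_eq F_eq[symmetric] by (rule inj_on_imp_bij_betw)
qed

end
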